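(* Let $\mathbb{F}$ be a finite field of odd characteristic and $\lambda$ the quadratic character of $\mathbb{F}^\times$ extended by $\lambda(0)=0$. For $z\in\mathbb{F}$ and $\gamma\in\mathbb{F}^\times$ let $X_{\mathbb{F},\gamma}(z)=\{(u,v)\in\mathbb{F}^2: v^2-(u^2-uz-4\gamma)v+\gamma z^2=0\}$. Then $$|X_{\mathbb{F},\gamma}(z)|=|\mathbb{F}|(1+\delta_{z,0})-1+\sum_{x\in\mathbb{F}}\lambda\big(x(x+16\gamma)(x+z^2)\big),$$ where $\delta_{z,0}=1$ if $z=0$ and $0$ otherwise. *)

theory Defs
  imports Main
begin

definition qchar :: "'a::field \<Rightarrow> int" where
  "qchar x = (if x = 0 then 0 else if (\<exists>y. y ^ 2 = x) then 1 else -1)"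

definition Xset :: "'a::field \<Rightarrow> 'a \<Rightarrow> ('a \<times> 'a) set" where
  "Xset \<gamma> z = {(u, v). v ^ 2 - (u ^ 2 - u * z - 4 * \<gamma>) * v + \<gamma> * z ^ 2 = 0}"

end

theory Submission
  imports Defs
begin

text \<open>For \<open>v \<noteq> 0\<close> the defining equation of \<open>X(z)\<close> is, after division by \<open>v\<close>, a monic
  quadratic in \<open>u\<close>; completing the square shows it has \<open>1 + \<lambda>(\<Delta>)\<close> roots, and rescaling the
  discriminant by the square \<open>(4v)\<^sup>2\<close> turns \<open>\<lambda>(\<Delta>)\<close> into \<open>\<lambda>(x (x + 16\<gamma>) (x + z\<^sup>2))\<close> at \<open>x = 4v\<close>.
  The fibre \<open>v = 0\<close> is all of \<open>\<FF>\<close> or empty according as \<open>z = 0\<close>. Summing over \<open>v\<close> and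
  substituting \<open>x = 4v\<close> gives the formula.\<close>

lemma two_neq_zero_if_odd_CHAR:
  assumes "odd CHAR('a::{semiring_1, zero_neq_one})"
  shows "(2::'a) \<noteq> 0"
proof
  assume "(2::'a) = 0"
  then have "CHAR('a) dvd 2"
    by (metis of_nat_eq_0_iff_char_dvd of_nat_numeral)
  then have "CHAR('a) \<le> 2"
    by (rule dvd_imp_le) simp
  with assms CHAR_not_1[where 'a='a] show False
    by presburger
qed

lemma four_neq_zero:
  assumes "(2::'a::{semiring_1, semiring_no_zero_divisors}) \<noteq> 0"
  shows "(4::'a) \<noteq> 0"
  using assms by (metis mult_eq_0_iff numeral_Bit0_eq_double)

lemma qchar_mult_square:
  fixes a s :: "'a::field"
  assumes "s \<noteq> 0"
  shows "qchar (s ^ 2 * a) = qchar a"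
proof -
  have "(\<exists>y. y ^ 2 = s ^ 2 * a) \<longleftrightarrow> (\<exists>y. y ^ 2 = a)"
  proof
    assume "\<exists>y. y ^ 2 = s ^ 2 * a"
    then obtain y where "y ^ 2 = s ^ 2 * a" by blast
    then have "(y / s) ^ 2 = a" using assms by (simp add: power_divide)
    then show "\<exists>y. y ^ 2 = a" by blast
  next
    assume "\<exists>y. y ^ 2 = a"
    then obtain y where "y ^ 2 = a" by blast
    then have "(s * y) ^ 2 = s ^ 2 * a" by (simp add: power_mult_distrib)
    then show "\<exists>y. y ^ 2 = s ^ 2 * a" by blast
  qed
  then show ?thesis using assms by (simp add: qchar_def)
qed

lemma card_square_roots:
  fixes d :: "'a::{field, finite}"
  assumes "(2::'a) \<noteq> 0"
  shows "int (card {t. t ^ 2 = d}) = 1 + qchar d"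
proof (cases "\<exists>y. y ^ 2 = d")
  case True
  then obtain y where y: "y ^ 2 = d" by blast
  have roots: "{t. t ^ 2 = d} = {y, - y}"
    using y power2_eq_iff[of _ y] by auto
  show ?thesis
  proof (cases "d = 0")
    case False
    then have "y \<noteq> - y"
      using y assms by (auto simp: equal_neg_zero)
    then show ?thesis using roots True False by (simp add: qchar_def)
  qed (use roots y in \<open>simp add: qchar_def\<close>)
next
  case False
  then have "{t. t ^ 2 = d} = {}" by auto
  then show ?thesis using False by (auto simp add: qchar_def)
qed

lemma card_quadratic_roots:
  fixes b c :: "'a::{field, finite}"
  assumes two: "(2::'a) \<noteq> 0"
  shows "int (card {u. u ^ 2 - b * u - c = 0}) = 1 + qchar (b ^ 2 + 4 * c)"
proof -
  have "(4::'a) \<noteq> 0"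
    using two by (rule four_neq_zero)
  have complete_square: "(2 * u - b) ^ 2 - (b ^ 2 + 4 * c) = 4 * (u ^ 2 - b * u - c)" for u
    by (simp add: power2_eq_square algebra_simps)
  have "bij_betw (\<lambda>u. 2 * u - b) {u. u ^ 2 - b * u - c = 0} {t. t ^ 2 = b ^ 2 + 4 * c}"
  proof (rule bij_betw_byWitness[where f' = "\<lambda>t. (t + b) / 2"])
    show "\<forall>u\<in>{u. u ^ 2 - b * u - c = 0}. (2 * u - b + b) / 2 = u"
      using two by simp
    show "\<forall>t\<in>{t. t ^ 2 = b ^ 2 + 4 * c}. 2 * ((t + b) / 2) - b = t"
      using two by (simp add: field_simps)
    show "(\<lambda>u. 2 * u - b) ` {u. u ^ 2 - b * u - c = 0} \<subseteq> {t. t ^ 2 = b ^ 2 + 4 * c}"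
    proof clarify
      fix u assume "u ^ 2 - b * u - c = 0"
      then have "(2 * u - b) ^ 2 - (b ^ 2 + 4 * c) = 0"
        using complete_square[of u] by simp
      then show "(2 * u - b) ^ 2 = b ^ 2 + 4 * c"
        by simp
    qed
    show "(\<lambda>t. (t + b) / 2) ` {t. t ^ 2 = b ^ 2 + 4 * c} \<subseteq> {u. u ^ 2 - b * u - c = 0}"
    proof clarify
      fix t assume "t ^ 2 = b ^ 2 + 4 * c"
      moreover have "2 * ((t + b) / 2) - b = t"
        using two by (simp add: field_simps)
      ultimately have "4 * (((t + b) / 2) ^ 2 - b * ((t + b) / 2) - c) = 0"
        using complete_square[of "(t + b) / 2"] by simp
      then show "((t + b) / 2) ^ 2 - b * ((t + b) / 2) - c = 0"
        using \<open>(4::'a) \<noteq> 0\<close> mult_eq_0_iff by blast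
    qed
  qed
  then have "card {u. u ^ 2 - b * u - c = 0} = card {t. t ^ 2 = b ^ 2 + 4 * c}"
    by (rule bij_betw_same_card)
  then show ?thesis
    using card_square_roots[OF two] by simp
qed

lemma sum_UNIV_reindex_mult:
  fixes c :: "'a::{field, finite}"
  assumes "c \<noteq> 0"
  shows "(\<Sum>x\<in>UNIV. f (c * x)) = (\<Sum>x\<in>UNIV. f x)"
proof -
  have "bij ((*) c)"
    by (rule bij_betw_byWitness[where f' = "\<lambda>x. x / c"]) (use assms in auto)
  then show ?thesis
    by (rule sum.reindex_bij_betw)
qed

lemma card_eq_sum_card_fibres:
  fixes A :: "('a::finite \<times> 'b::finite) set"
  shows "card A = (\<Sum>v\<in>UNIV. card {u. (u, v) \<in> A})"
proof -
  have "bij_betw (\<lambda>(v, u). (u, v)) (SIGMA v:UNIV. {u. (u, v) \<in> A}) A"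
    by (rule bij_betw_byWitness[where f' = "\<lambda>(u, v). (v, u)"]) auto
  then show ?thesis
    by (metis bij_betw_same_card card_SigmaI finite)
qed

lemma Xset_fibre_zero:
  fixes \<gamma> z :: "'a::field"
  assumes "\<gamma> \<noteq> 0"
  shows "{u. (u, 0) \<in> Xset \<gamma> z} = (if z = 0 then UNIV else {})"
  using assms by (auto simp: Xset_def)

lemma Xset_fibre_nonzero:
  fixes \<gamma> z v :: "'a::field"
  assumes "v \<noteq> 0"
  shows "{u. (u, v) \<in> Xset \<gamma> z} = {u. u ^ 2 - z * u - (4 * \<gamma> + v + \<gamma> * z ^ 2 / v) = 0}"
proof -
  have "(u, v) \<in> Xset \<gamma> z \<longleftrightarrow> u ^ 2 - z * u - (4 * \<gamma> + v + \<gamma> * z ^ 2 / v) = 0" for u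
  proof -
    have "v * (u ^ 2 - z * u - (4 * \<gamma> + v + \<gamma> * z ^ 2 / v))
        = - (v ^ 2 - (u ^ 2 - u * z - 4 * \<gamma>) * v + \<gamma> * z ^ 2)"
      using assms by (simp add: field_simps power2_eq_square)
    then have "(u, v) \<in> Xset \<gamma> z \<longleftrightarrow> v * (u ^ 2 - z * u - (4 * \<gamma> + v + \<gamma> * z ^ 2 / v)) = 0"
      by (simp only: Xset_def mem_Collect_eq case_prod_conv neg_equal_0_iff_equal)
    then show ?thesis
      using assms by simp
  qed
  then show ?thesis
    by blast
qed

lemma card_Xset_fibre_nonzero:
  fixes \<gamma> z v :: "'a::{field, finite}"
  assumes two: "(2::'a) \<noteq> 0" and "v \<noteq> 0"
  shows "int (card {u. (u, v) \<in> Xset \<gamma> z})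
           = 1 + qchar ((4 * v) * (4 * v + 16 * \<gamma>) * (4 * v + z ^ 2))"
proof -
  have "(4::'a) \<noteq> 0"
    using two by (rule four_neq_zero)
  with assms(2) have "4 * v \<noteq> 0" by simp
  have "int (card {u. (u, v) \<in> Xset \<gamma> z})
      = 1 + qchar (z ^ 2 + 4 * (4 * \<gamma> + v + \<gamma> * z ^ 2 / v))"
    unfolding Xset_fibre_nonzero[OF assms(2)] by (rule card_quadratic_roots[OF two])
  also have "\<dots> = 1 + qchar ((4 * v) ^ 2 * (z ^ 2 + 4 * (4 * \<gamma> + v + \<gamma> * z ^ 2 / v)))"
    by (simp only: qchar_mult_square[OF \<open>4 * v \<noteq> 0\<close>])
  also have "(4 * v) ^ 2 * (z ^ 2 + 4 * (4 * \<gamma> + v + \<gamma> * z ^ 2 / v))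
      = (4 * v) * (4 * v + 16 * \<gamma>) * (4 * v + z ^ 2)"
    using assms(2) by (simp add: field_simps power2_eq_square)
  finally show ?thesis .
qed

theorem lemma3p4:
  fixes \<gamma> z :: "'a::{field, finite}"
  assumes "odd CHAR('a)"
    and "\<gamma> \<noteq> 0"
  shows "int (card (Xset \<gamma> z)) =
           int (card (UNIV :: 'a set)) * (1 + (if z = 0 then 1 else 0)) - 1
           + (\<Sum>x\<in>UNIV. qchar (x * (x + 16 * \<gamma>) * (x + z ^ 2)))"
proof -
  define N where "N = int (card (UNIV :: 'a set))"
  define h where "h x = qchar (x * (x + 16 * \<gamma>) * (x + z ^ 2))" for x :: 'a
  have two: "(2::'a) \<noteq> 0"
    using assms(1) by (rule two_neq_zero_if_odd_CHAR)
  have "(4::'a) \<noteq> 0"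
    using two by (rule four_neq_zero)
  \<comment> \<open>The \<open>v = 0\<close> fibre is absorbed as a correction term, using \<open>h 0 = 0\<close>.\<close>
  have fibre: "int (card {u. (u, v) \<in> Xset \<gamma> z})
      = 1 + h (4 * v) + (if v = 0 then N * (if z = 0 then 1 else 0) - 1 else 0)" for v
    using card_Xset_fibre_nonzero[OF two] Xset_fibre_zero[OF assms(2)]
    by (cases "v = 0") (simp_all add: h_def N_def qchar_def)
  have "int (card (Xset \<gamma> z)) = (\<Sum>v\<in>UNIV. int (card {u. (u, v) \<in> Xset \<gamma> z}))"
    by (simp add: card_eq_sum_card_fibres)
  also have "\<dots> = N + (\<Sum>v\<in>UNIV. h (4 * v)) + (N * (if z = 0 then 1 else 0) - 1)"
    by (simp add: fibre sum.distrib N_def)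
  also have "(\<Sum>v\<in>UNIV. h (4 * v)) = (\<Sum>x\<in>UNIV. h x)"
    using \<open>(4::'a) \<noteq> 0\<close> by (rule sum_UNIV_reindex_mult)
  finally show ?thesis
    by (simp add: N_def h_def algebra_simps)
qed

end
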